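(* Let $(M,T^{1,0}M)$ be a strictly pseudoconvex CR manifold of dimension three. For a contact form $\theta$ and $u\in C^\infty(M)$, define $$d^c_{\mathrm{CR}}u=\frac{\sqrt{-1}}2\big(u_{\bar1}\theta^{\bar1}-u_1\theta^1\big)+\frac12(\Delta_bu)\,\theta.$$ Then the operator $d^c_{\mathrm{CR}}\colon C^\infty(M)\to\Omega^1(M)$ is independent of the choice of contact form $\theta$ (and of the local frame).
   Context: $(M,T^{1,0}M)$: smooth 3-manifold with a complex line subbundle $T^{1,0}M\subset TM\otimes\mathbb C$, $T^{1,0}M\cap\overline{T^{1,0}M}=0$. A contact form is a nowhere vanishing real 1-form $\theta$ annihilating $T^{1,0}M$ with $-\sqrt{-1}d\theta(Z,\bar Z)>0$ for $0\ne Z\in T^{1,0}M$. For a contact form $\theta$ with Reeb field $T$ ($\theta(T)=1,\iota_Td\theta=0$), a local frame $Z_1$ of $T^{1,0}M$, $Z_{\bar1}=\overline{Z_1}$, $(\theta,\theta^1,\theta^{\bar1})$ is the coframe dual to $(T,Z_1,Z_{\bar1})$, $d\theta=\sqrt{-1}l_{1\bar1}\theta^1\wedge\theta^{\bar1}$, and indices are raised/lowered with $l_{1\bar1}$. $u_1=Z_1u$, $u_{\bar1}=Z_{\bar1}u$, and second subscripts denote Tanaka–Webster covariant derivatives ($\nabla T=0$, $\nabla Z_1=\omega_1{}^1Z_1$ with $d\theta^1=\theta^1\wedge\omega_1{}^1+A^1{}_{\bar1}\theta\wedge\theta^{\bar1}$, $dl_{1\bar1}=\omega_1{}^1l_{1\bar1}+l_{1\bar1}\overline{\omega_1{}^1}$).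 The sub-Laplacian is $\Delta_bu=-u_{\bar1}{}^{\bar1}-u_1{}^1$. *)

theory Defs
  imports "HOL-Analysis.Analysis"
begin

text \<open>Local model: an open set U in R^3 (a coordinate chart of the 3-manifold M).
Complex vector fields and complex 1-forms are given by their coefficient vectors
in complex^3 with respect to the coordinate frame d/dx_i resp. coframe dx_i.\<close>

definition partial :: "3 \<Rightarrow> (real^3 \<Rightarrow> complex) \<Rightarrow> real^3 \<Rightarrow> complex" where
  "partial i g p = vector_derivative (\<lambda>t::real. g (p + t *\<^sub>R axis i 1)) (at 0)"

fun iter_partial :: "3 list \<Rightarrow> (real^3 \<Rightarrow> complex) \<Rightarrow> real^3 \<Rightarrow> complex" where
  "iter_partial [] g = g"
| "iter_partial (i # is) g = partial i (iter_partial is g)"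

definition smooth_on :: "(real^3) set \<Rightarrow> (real^3 \<Rightarrow> complex) \<Rightarrow> bool" where
  "smooth_on U g \<longleftrightarrow> (\<forall>is. \<forall>p\<in>U. iter_partial is g differentiable (at p))"

definition smooth_field :: "(real^3) set \<Rightarrow> (real^3 \<Rightarrow> complex^3) \<Rightarrow> bool" where
  "smooth_field U X \<longleftrightarrow> (\<forall>i. smooth_on U (\<lambda>p. X p $ i))"

definition pair :: "complex^3 \<Rightarrow> complex^3 \<Rightarrow> complex" where
  "pair a v = (\<Sum>i\<in>UNIV. a $ i * v $ i)"

definition cconj :: "complex^3 \<Rightarrow> complex^3" where
  "cconj v = (\<chi> i. cnj (v $ i))"

definition dfun :: "(real^3 \<Rightarrow> complex) \<Rightarrow> real^3 \<Rightarrow> complex^3 \<Rightarrow> complex" where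
  "dfun g p v = (\<Sum>i\<in>UNIV. v $ i * partial i g p)"

definition vf :: "(real^3 \<Rightarrow> complex^3) \<Rightarrow> (real^3 \<Rightarrow> complex) \<Rightarrow> real^3 \<Rightarrow> complex" where
  "vf X g p = dfun g p (X p)"

text \<open>Exterior derivative of a 1-form evaluated on two vectors, and wedge of 1-forms,
with the convention (a \<and> b)(v,w) = a(v)b(w) - a(w)b(v).\<close>
definition dform :: "(real^3 \<Rightarrow> complex^3) \<Rightarrow> real^3 \<Rightarrow> complex^3 \<Rightarrow> complex^3 \<Rightarrow> complex" where
  "dform a p v w = (\<Sum>i\<in>UNIV. \<Sum>j\<in>UNIV.
      (partial i (\<lambda>q. a q $ j) p - partial j (\<lambda>q. a q $ i) p) * v $ i * w $ j)"

definition wedge :: "complex^3 \<Rightarrow> complex^3 \<Rightarrow> complex^3 \<Rightarrow> complex^3 \<Rightarrow> complex" where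
  "wedge a b v w = pair a v * pair b w - pair a w * pair b v"

text \<open>Z is a local frame of a CR structure T^{1,0} (complex line bundle with
T^{1,0} \<inter> conj T^{1,0} = 0) on U.\<close>
definition CR_frame :: "(real^3) set \<Rightarrow> (real^3 \<Rightarrow> complex^3) \<Rightarrow> bool" where
  "CR_frame U Z \<longleftrightarrow> smooth_field U Z \<and>
     (\<forall>p\<in>U. \<forall>a b::complex. a *s Z p + b *s cconj (Z p) = 0 \<longrightarrow> a = 0 \<and> b = 0)"

text \<open>l_{1 1bar}, determined by d theta = i l theta^1 \<and> theta^{1bar} (evaluated at (Z, Zbar)).\<close>
definition levi :: "(real^3 \<Rightarrow> complex^3) \<Rightarrow> (real^3 \<Rightarrow> complex^3) \<Rightarrow> real^3 \<Rightarrow> complex" where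
  "levi \<theta> Z p = - \<i> * dform \<theta> p (Z p) (cconj (Z p))"

definition contact_form :: "(real^3) set \<Rightarrow> (real^3 \<Rightarrow> complex^3) \<Rightarrow> (real^3 \<Rightarrow> complex^3) \<Rightarrow> bool" where
  "contact_form U Z \<theta> \<longleftrightarrow> smooth_field U \<theta> \<and>
     (\<forall>p\<in>U. (\<forall>i. \<theta> p $ i \<in> \<real>) \<and> \<theta> p \<noteq> 0 \<and> pair (\<theta> p) (Z p) = 0 \<and>
       (\<forall>c::complex. c \<noteq> 0 \<longrightarrow>
          (let W = c *s Z p in - \<i> * dform \<theta> p W (cconj W) \<in> \<real> \<and> Re (- \<i> * dform \<theta> p W (cconj W)) > 0)))"

definition reeb_field :: "(real^3) set \<Rightarrow> (real^3 \<Rightarrow> complex^3) \<Rightarrow> (real^3 \<Rightarrow> complex^3) \<Rightarrow> bool" where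
  "reeb_field U \<theta> T \<longleftrightarrow> smooth_field U T \<and>
     (\<forall>p\<in>U. (\<forall>i. T p $ i \<in> \<real>) \<and> pair (\<theta> p) (T p) = 1 \<and> (\<forall>w. dform \<theta> p (T p) w = 0))"

text \<open>theta^1 such that (theta, theta^1, theta^{1bar} = conj theta^1) is dual to (T, Z, Zbar).\<close>
definition dual_coframe :: "(real^3) set \<Rightarrow> (real^3 \<Rightarrow> complex^3) \<Rightarrow> (real^3 \<Rightarrow> complex^3)
     \<Rightarrow> (real^3 \<Rightarrow> complex^3) \<Rightarrow> bool" where
  "dual_coframe U Z T \<theta>1 \<longleftrightarrow> smooth_field U \<theta>1 \<and>
     (\<forall>p\<in>U. pair (\<theta>1 p) (T p) = 0 \<and> pair (\<theta>1 p) (Z p) = 1 \<and> pair (\<theta>1 p) (cconj (Z p)) = 0)"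

text \<open>Tanaka--Webster connection form omega_1^1 and torsion A^1_{1bar}:
 d theta^1 = theta^1 \<and> omega + A theta \<and> theta^{1bar},  dl = omega l + l conj(omega).\<close>
definition TW_connection :: "(real^3) set \<Rightarrow> (real^3 \<Rightarrow> complex^3) \<Rightarrow> (real^3 \<Rightarrow> complex^3)
     \<Rightarrow> (real^3 \<Rightarrow> complex^3) \<Rightarrow> (real^3 \<Rightarrow> complex^3) \<Rightarrow> (real^3 \<Rightarrow> complex) \<Rightarrow> bool" where
  "TW_connection U Z \<theta> \<theta>1 \<omega> A \<longleftrightarrow> smooth_field U \<omega> \<and> smooth_on U A \<and>
     (\<forall>p\<in>U. (\<forall>v w. dform \<theta>1 p v w = wedge (\<theta>1 p) (\<omega> p) v w + A p * wedge (\<theta> p) (cconj (\<theta>1 p)) v w) \<and>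
       (\<forall>v. dfun (levi \<theta> Z) p v = pair (\<omega> p) v * levi \<theta> Z p + levi \<theta> Z p * pair (cconj (\<omega> p)) v))"

definition pseudohermitian_data :: "(real^3) set \<Rightarrow> (real^3 \<Rightarrow> complex^3) \<Rightarrow> (real^3 \<Rightarrow> complex^3)
     \<Rightarrow> (real^3 \<Rightarrow> complex^3) \<Rightarrow> (real^3 \<Rightarrow> complex^3) \<Rightarrow> (real^3 \<Rightarrow> complex^3) \<Rightarrow> (real^3 \<Rightarrow> complex) \<Rightarrow> bool" where
  "pseudohermitian_data U Z \<theta> T \<theta>1 \<omega> A \<longleftrightarrow>
     contact_form U Z \<theta> \<and> reeb_field U \<theta> T \<and> dual_coframe U Z T \<theta>1 \<and> TW_connection U Z \<theta> \<theta>1 \<omega> A"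

text \<open>Tanaka--Webster second covariant derivatives of a function cu:
 u_{1 1bar} = Zbar Z u - omega_1^1(Zbar) Z u,  u_{1bar 1} = Z Zbar u - omega_{1bar}^{1bar}(Z) Zbar u,
 with omega_{1bar}^{1bar} = conj omega_1^1; indices raised with l^{1 1bar} = 1/l.\<close>
definition sublaplacian :: "(real^3 \<Rightarrow> complex^3) \<Rightarrow> (real^3 \<Rightarrow> complex^3) \<Rightarrow> (real^3 \<Rightarrow> complex^3)
     \<Rightarrow> (real^3 \<Rightarrow> complex) \<Rightarrow> real^3 \<Rightarrow> complex" where
  "sublaplacian Z \<theta> \<omega> cu p =
     (let Zb = (\<lambda>q. cconj (Z q));
          u11b = vf Zb (vf Z cu) p - pair (\<omega> p) (Zb p) * vf Z cu p;
          u1b1 = vf Z (vf Zb cu) p - pair (cconj (\<omega> p)) (Z p) * vf Zb cu p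
      in - (u1b1 / levi \<theta> Z p + u11b / levi \<theta> Z p))"

definition dcCR :: "(real^3 \<Rightarrow> complex^3) \<Rightarrow> (real^3 \<Rightarrow> complex^3) \<Rightarrow> (real^3 \<Rightarrow> complex^3)
     \<Rightarrow> (real^3 \<Rightarrow> complex^3) \<Rightarrow> (real^3 \<Rightarrow> real) \<Rightarrow> real^3 \<Rightarrow> complex^3" where
  "dcCR Z \<theta> \<theta>1 \<omega> u p =
     (let cu = (\<lambda>q. complex_of_real (u q));
          u1 = vf Z cu p; u1b = vf (\<lambda>q. cconj (Z q)) cu p
      in (\<i> / 2) *s (u1b *s cconj (\<theta>1 p) - u1 *s \<theta>1 p) + (sublaplacian Z \<theta> \<omega> cu p / 2) *s \<theta> p)"

end

theory Submission
  imports Defs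
begin

(* Two admissible choices of data differ by Z' = c Z and \<theta>' = \<sigma> \<theta> with \<sigma> real, hence
   \<theta>1' = c\<inverse> \<theta>1 + h \<theta>. The Reeb condition for T' determines h in terms of Z \<sigma>, and the
   structure equation for d \<theta>1' expresses \<omega>'(Zbar') through \<omega>(Zbar), Zbar c and Z \<sigma>.
   Consequently u_{1 1bar} and u_{1bar 1} get multiplied by |c|^2 up to terms linear in u_1, u_{1bar},
   so \<sigma> \<Delta>_b' u differs from \<Delta>_b u by such a term. In d^c_CR u that term is cancelled exactly
   by the \<theta>-component contributed by the shift h \<theta> in \<theta>1', while c\<inverse> \<theta>1 paired with
   u_1' = c u_1 is invariant. *)

lemma partial_has_vector_derivative:
  assumes "g differentiable (at p)"
  shows "((\<lambda>t. g (p + t *\<^sub>R axis i 1)) has_vector_derivative partial i g p) (at 0)"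
proof -
  have "(\<lambda>t::real. p + t *\<^sub>R axis i (1::real)) differentiable (at 0)"
    by (intro derivative_intros)
  from differentiable_chain_at[OF this, of g]
  have "(\<lambda>t. g (p + t *\<^sub>R axis i 1)) differentiable (at 0)"
    using assms by (simp add: o_def)
  then show ?thesis unfolding partial_def by (simp add: vector_derivative_works[symmetric])
qed

lemma partial_cong:
  assumes "open U" "p \<in> U" "\<forall>q\<in>U. f q = g q"
  shows "partial i f p = partial i g p"
proof -
  obtain e where e: "e > 0" "ball p e \<subseteq> U" using assms open_contains_ball by blast
  have "\<forall>\<^sub>F t in nhds 0. f (p + t *\<^sub>R axis i 1) = g (p + t *\<^sub>R axis i 1)"
    unfolding eventually_nhds_metric
  proof (intro exI[of _ e] conjI allI impI)
    fix t :: real assume "dist t 0 < e"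
    then have "p + t *\<^sub>R axis i 1 \<in> ball p e" by (simp add: dist_norm)
    then show "f (p + t *\<^sub>R axis i 1) = g (p + t *\<^sub>R axis i 1)" using e assms by auto
  qed (use e in auto)
  then show ?thesis unfolding partial_def by (intro vector_derivative_cong_eq) auto
qed

lemma partial_mult:
  assumes "f differentiable (at p)" "g differentiable (at p)"
  shows "partial i (\<lambda>q. f q * g q) p = f p * partial i g p + partial i f p * g p"
proof -
  have "((\<lambda>t. f (p + t *\<^sub>R axis i 1) * g (p + t *\<^sub>R axis i 1)) has_vector_derivative
      (f p * partial i g p + partial i f p * g p)) (at 0)"
    using has_vector_derivative_mult[OF partial_has_vector_derivative[OF assms(1)]
        partial_has_vector_derivative[OF assms(2)]] by simp
  then show ?thesis unfolding partial_def by (rule vector_derivative_at)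
qed

lemma partial_add:
  assumes "f differentiable (at p)" "g differentiable (at p)"
  shows "partial i (\<lambda>q. f q + g q) p = partial i f p + partial i g p"
proof -
  have "((\<lambda>t. f (p + t *\<^sub>R axis i 1) + g (p + t *\<^sub>R axis i 1)) has_vector_derivative
      (partial i f p + partial i g p)) (at 0)"
    using has_vector_derivative_add[OF partial_has_vector_derivative[OF assms(1)]
        partial_has_vector_derivative[OF assms(2)]] by simp
  then show ?thesis unfolding partial_def by (rule vector_derivative_at)
qed

lemma partial_cnj:
  assumes "f differentiable (at p)"
  shows "partial i (\<lambda>q. cnj (f q)) p = cnj (partial i f p)"
proof -
  have "((\<lambda>t. cnj (f (p + t *\<^sub>R axis i 1))) has_vector_derivative cnj (partial i f p)) (at 0)"
    using has_vector_derivative_cnj[OF partial_has_vector_derivative[OF assms]] by simp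
  then show ?thesis unfolding partial_def by (rule vector_derivative_at)
qed

lemma partial_const: "partial i (\<lambda>q. c) p = 0"
  unfolding partial_def by (rule vector_derivative_at) (rule has_vector_derivative_const)

lemma cconj_cconj [simp]: "cconj (cconj v) = v"
  by (simp add: cconj_def vec_eq_iff)

lemma cconj_scale: "cconj (c *s v) = cnj c *s cconj v"
  by (simp add: cconj_def vec_eq_iff)

lemma cconj_add: "cconj (v + w) = cconj v + cconj w"
  by (simp add: cconj_def vec_eq_iff)

lemma cconj_real: "(\<forall>i. v $ i \<in> \<real>) \<Longrightarrow> cconj v = v"
  by (simp add: cconj_def vec_eq_iff Reals_cnj_iff)

lemma pair_cconj_cconj: "pair (cconj a) (cconj v) = cnj (pair a v)"
  by (simp add: pair_def cconj_def)

lemma pair_cconj_left: "pair (cconj a) v = cnj (pair a (cconj v))"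
  by (simp add: pair_def cconj_def)

lemma pair_scale_right: "pair a (c *s v) = c * pair a v"
  by (simp add: pair_def sum_distrib_left algebra_simps)

lemma pair_scale_left: "pair (c *s a) v = c * pair a v"
  by (simp add: pair_def sum_distrib_left algebra_simps)

lemma pair_add_right: "pair a (v + w) = pair a v + pair a w"
  by (simp add: pair_def sum.distrib algebra_simps)

lemma pair_add_left: "pair (a + b) v = pair a v + pair b v"
  by (simp add: pair_def sum.distrib algebra_simps)

lemma pair_axis: "pair a (axis j 1) = a $ j"
  by (simp add: pair_def axis_def if_distrib cong: if_cong)

lemma dual_basis_expansion:
  fixes T Z \<alpha> \<beta> v :: "complex^3"
  assumes "pair \<alpha> T = 1" "pair \<alpha> Z = 0" "pair \<alpha> (cconj Z) = 0"
    and "pair \<beta> T = 0" "pair \<beta> Z = 1" "pair \<beta> (cconj Z) = 0"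
    and "cconj T = T"
  shows "v = pair \<alpha> v *s T + pair \<beta> v *s Z + pair (cconj \<beta>) v *s cconj Z"
proof -
  define M :: "complex^3^3" where "M = vector [\<alpha>, \<beta>, cconj \<beta>]"
  define N :: "complex^3^3" where "N = transpose (vector [T, Z, cconj Z])"
  have "pair (cconj \<beta>) T = 0" "pair (cconj \<beta>) Z = 0" "pair (cconj \<beta>) (cconj Z) = 1"
    using assms by (simp_all add: pair_cconj_left)
  then have "M ** N = mat 1"
    unfolding M_def N_def matrix_matrix_mult_def mat_def transpose_def
    using assms by (simp add: vec_eq_iff forall_3 pair_def)
  then have "N ** M = mat 1" by (simp add: matrix_left_right_inverse)
  then have "v = N *v (M *v v)" by (simp add: matrix_vector_mul_assoc)
  also have "\<dots> = pair \<alpha> v *s T + pair \<beta> v *s Z + pair (cconj \<beta>) v *s cconj Z"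
    unfolding M_def N_def matrix_vector_mult_def transpose_def
    by (simp add: vec_eq_iff sum_3 pair_def algebra_simps)
  finally show ?thesis .
qed

lemma smooth_on_differentiable: "smooth_on U g \<Longrightarrow> p \<in> U \<Longrightarrow> g differentiable (at p)"
  unfolding smooth_on_def by (metis iter_partial.simps(1))

lemma smooth_on_partial_differentiable:
  "smooth_on U g \<Longrightarrow> p \<in> U \<Longrightarrow> partial i g differentiable (at p)"
  unfolding smooth_on_def by (metis iter_partial.simps)

lemma smooth_field_differentiable:
  "smooth_field U X \<Longrightarrow> p \<in> U \<Longrightarrow> (\<lambda>q. X q $ j) differentiable (at p)"
  unfolding smooth_field_def using smooth_on_differentiable by blast

lemma smooth_field_cconj_differentiable:
  "smooth_field U X \<Longrightarrow> p \<in> U \<Longrightarrow> (\<lambda>q. cconj (X q) $ j) differentiable (at p)"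
  unfolding cconj_def using smooth_field_differentiable[of U X p j]
  by (simp add: differentiable_cnj_iff)

lemma pair_differentiable:
  assumes "\<And>j. (\<lambda>q. a q $ j) differentiable (at p)" "\<And>j. (\<lambda>q. b q $ j) differentiable (at p)"
  shows "(\<lambda>q. pair (a q) (b q)) differentiable (at p)"
  unfolding pair_def using assms by (intro differentiable_sum differentiable_mult) auto

lemma vf_differentiable:
  assumes "\<And>j. (\<lambda>q. X q $ j) differentiable (at p)" "\<And>j. partial j g differentiable (at p)"
  shows "vf X g differentiable (at p)"
proof -
  have "vf X g = (\<lambda>q. \<Sum>i\<in>UNIV. X q $ i * partial i g q)"
    by (simp add: vf_def dfun_def fun_eq_iff)
  then show ?thesis using assms by (auto intro!: differentiable_sum differentiable_mult)
qed

lemma dfun_scale: "dfun g p (c *s v) = c * dfun g p v"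
  by (simp add: dfun_def sum_distrib_left algebra_simps)

lemma dfun_const: "dfun (\<lambda>q. c) p v = 0"
  by (simp add: dfun_def partial_const)

lemma dfun_cong: "open U \<Longrightarrow> p \<in> U \<Longrightarrow> \<forall>q\<in>U. f q = g q \<Longrightarrow> dfun f p v = dfun g p v"
  unfolding dfun_def using partial_cong by metis

lemma dfun_mult:
  "f differentiable (at p) \<Longrightarrow> g differentiable (at p) \<Longrightarrow>
   dfun (\<lambda>q. f q * g q) p v = f p * dfun g p v + dfun f p v * g p"
  by (simp add: dfun_def partial_mult sum.distrib sum_distrib_left sum_distrib_right algebra_simps)

lemma dfun_cnj: "f differentiable (at p) \<Longrightarrow> dfun (\<lambda>q. cnj (f q)) p (cconj v) = cnj (dfun f p v)"
  by (simp add: dfun_def partial_cnj cconj_def)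

lemma dform_add_left: "dform a p (v + v') w = dform a p v w + dform a p v' w"
  by (simp add: dform_def sum_3 algebra_simps)

lemma dform_scale_left: "dform a p (c *s v) w = c * dform a p v w"
  by (simp add: dform_def sum_3 algebra_simps)

lemma dform_scale_right: "dform a p v (c *s w) = c * dform a p v w"
  by (simp add: dform_def sum_3 algebra_simps)

lemma dform_antisym: "dform a p v w = - dform a p w v"
  by (simp add: dform_def sum_3 algebra_simps)

lemma dform_leibniz:
  assumes "open U" "p \<in> U" "\<forall>q\<in>U. b q = f q *s a q + g q *s c q"
    and "f differentiable (at p)" "g differentiable (at p)"
    and "\<And>j. (\<lambda>q. a q $ j) differentiable (at p)" "\<And>j. (\<lambda>q. c q $ j) differentiable (at p)"
  shows "dform b p v w =
      f p * dform a p v w + (dfun f p v * pair (a p) w - dfun f p w * pair (a p) v)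
    + g p * dform c p v w + (dfun g p v * pair (c p) w - dfun g p w * pair (c p) v)"
proof -
  have "partial i (\<lambda>q. b q $ j) p
      = f p * partial i (\<lambda>q. a q $ j) p + partial i f p * a p $ j
      + (g p * partial i (\<lambda>q. c q $ j) p + partial i g p * c p $ j)" for i j
  proof -
    have "partial i (\<lambda>q. b q $ j) p = partial i (\<lambda>q. f q * a q $ j + g q * c q $ j) p"
      using assms(1-3) by (intro partial_cong) auto
    also have "\<dots> = partial i (\<lambda>q. f q * a q $ j) p + partial i (\<lambda>q. g q * c q $ j) p"
      using assms by (intro partial_add) auto
    finally show ?thesis using assms by (simp add: partial_mult)
  qed
  then show ?thesis
    unfolding dform_def dfun_def pair_def by (simp add: sum_3 algebra_simps)
qed

locale pseudohermitian_frame =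
  fixes U :: "(real^3) set"
    and Z \<theta> T \<theta>1 \<omega> :: "real^3 \<Rightarrow> complex^3"
    and A :: "real^3 \<Rightarrow> complex"
  assumes open_U: "open U"
    and cr_frame: "CR_frame U Z"
    and data: "pseudohermitian_data U Z \<theta> T \<theta>1 \<omega> A"
begin

lemma contact: "contact_form U Z \<theta>"
  and reeb: "reeb_field U \<theta> T"
  and coframe: "dual_coframe U Z T \<theta>1"
  and connection: "TW_connection U Z \<theta> \<theta>1 \<omega> A"
  using data by (auto simp: pseudohermitian_data_def)

lemma smooth_fields: "smooth_field U Z" "smooth_field U \<theta>" "smooth_field U T" "smooth_field U \<theta>1"
  using cr_frame contact reeb coframe
  by (auto simp: CR_frame_def contact_form_def reeb_field_def dual_coframe_def)

context
  fixes q assumes q: "q \<in> U"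
begin

lemma theta_real: "cconj (\<theta> q) = \<theta> q"
  using contact q by (auto simp: contact_form_def intro: cconj_real)

lemma reeb_real: "cconj (T q) = T q"
  using reeb q by (auto simp: reeb_field_def intro: cconj_real)

lemma theta_nonzero: "\<theta> q \<noteq> 0"
  and theta_Z: "pair (\<theta> q) (Z q) = 0"
  using contact q by (auto simp: contact_form_def)

lemma theta_Zbar: "pair (\<theta> q) (cconj (Z q)) = 0"
  using theta_Z theta_real pair_cconj_cconj[of "\<theta> q" "Z q"] by simp

lemma theta_reeb: "pair (\<theta> q) (T q) = 1"
  and dform_theta_reeb: "dform \<theta> q (T q) w = 0"
  using reeb q by (auto simp: reeb_field_def)

lemma theta1_reeb: "pair (\<theta>1 q) (T q) = 0"
  and theta1_Z: "pair (\<theta>1 q) (Z q) = 1"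
  and theta1_Zbar: "pair (\<theta>1 q) (cconj (Z q)) = 0"
  using coframe q by (auto simp: dual_coframe_def)

lemma levi_real: "cnj (levi \<theta> Z q) = levi \<theta> Z q"
  and levi_nonzero: "levi \<theta> Z q \<noteq> 0"
proof -
  have "let W = 1 *s Z q in
      - \<i> * dform \<theta> q W (cconj W) \<in> \<real> \<and> Re (- \<i> * dform \<theta> q W (cconj W)) > 0"
    using contact q unfolding contact_form_def by (metis one_neq_zero)
  then have "levi \<theta> Z q \<in> \<real>" "Re (levi \<theta> Z q) > 0" by (simp_all add: Let_def levi_def)
  then show "cnj (levi \<theta> Z q) = levi \<theta> Z q" "levi \<theta> Z q \<noteq> 0"
    using Reals_cnj_iff by auto
qed

lemma dform_theta_Z_Zbar: "dform \<theta> q (Z q) (cconj (Z q)) = \<i> * levi \<theta> Z q"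
  by (simp add: levi_def)

lemma connection_Zbar: "pair (\<omega> q) (cconj (Z q)) = dform \<theta>1 q (Z q) (cconj (Z q))"
proof -
  have "dform \<theta>1 q (Z q) (cconj (Z q)) = wedge (\<theta>1 q) (\<omega> q) (Z q) (cconj (Z q))
      + A q * wedge (\<theta> q) (cconj (\<theta>1 q)) (Z q) (cconj (Z q))"
    using connection q by (auto simp: TW_connection_def)
  then show ?thesis using theta1_Z theta1_Zbar theta_Z theta_Zbar by (simp add: wedge_def)
qed

lemma vector_expansion:
  "v = pair (\<theta> q) v *s T q + pair (\<theta>1 q) v *s Z q + pair (cconj (\<theta>1 q)) v *s cconj (Z q)"
  by (rule dual_basis_expansion[OF theta_reeb theta_Z theta_Zbar theta1_reeb theta1_Z theta1_Zbar
        reeb_real])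

lemma covector_expansion:
  "a = pair a (T q) *s \<theta> q + pair a (Z q) *s \<theta>1 q + pair a (cconj (Z q)) *s cconj (\<theta>1 q)"
proof (subst vec_eq_iff, intro allI)
  fix j
  have "a $ j = pair a (axis j 1)" by (simp add: pair_axis)
  also have "\<dots> = (pair a (T q) *s \<theta> q + pair a (Z q) *s \<theta>1 q
      + pair a (cconj (Z q)) *s cconj (\<theta>1 q)) $ j"
    by (subst vector_expansion) (simp add: pair_add_right pair_scale_right pair_axis)
  finally show "a $ j = \<dots>" .
qed

end

end

definition hess_1_1bar ::
    "(real^3 \<Rightarrow> complex^3) \<Rightarrow> (real^3 \<Rightarrow> complex^3) \<Rightarrow> (real^3 \<Rightarrow> complex)
      \<Rightarrow> real^3 \<Rightarrow> complex"
  where "hess_1_1bar Z \<omega> f p =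
    vf (\<lambda>q. cconj (Z q)) (vf Z f) p - pair (\<omega> p) (cconj (Z p)) * vf Z f p"

definition hess_1bar_1 ::
    "(real^3 \<Rightarrow> complex^3) \<Rightarrow> (real^3 \<Rightarrow> complex^3) \<Rightarrow> (real^3 \<Rightarrow> complex)
      \<Rightarrow> real^3 \<Rightarrow> complex"
  where "hess_1bar_1 Z \<omega> f p =
    vf Z (vf (\<lambda>q. cconj (Z q)) f) p - pair (cconj (\<omega> p)) (Z p) * vf (\<lambda>q. cconj (Z q)) f p"

lemma sublaplacian_eq_hess:
  "sublaplacian Z \<theta> \<omega> f p = - (hess_1bar_1 Z \<omega> f p + hess_1_1bar Z \<omega> f p) / levi \<theta> Z p"
  by (simp add: sublaplacian_def hess_1_1bar_def hess_1bar_1_def Let_def divide_inverse algebra_simps)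

locale frame_change =
  F: pseudohermitian_frame U Z \<theta> T \<theta>1 \<omega> A + F': pseudohermitian_frame U Z' \<theta>' T' \<theta>1' \<omega>' A'
  for U Z \<theta> T \<theta>1 \<omega> A Z' \<theta>' T' \<theta>1' \<omega>' A' +
  assumes Z'_multiple: "\<forall>q\<in>U. \<exists>c::complex. c \<noteq> 0 \<and> Z' q = c *s Z q"
begin

definition c :: "real^3 \<Rightarrow> complex" where "c q = pair (\<theta>1 q) (Z' q)"
definition \<sigma> :: "real^3 \<Rightarrow> complex" where "\<sigma> q = pair (\<theta>' q) (T q)"
definition g :: "real^3 \<Rightarrow> complex" where "g q = pair (\<theta>1' q) (Z q)"
definition h :: "real^3 \<Rightarrow> complex" where "h q = pair (\<theta>1' q) (T q)"

context
  fixes q assumes q: "q \<in> U"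
begin

lemma Z'_eq: "Z' q = c q *s Z q"
  and c_nonzero: "c q \<noteq> 0"
proof -
  obtain c0 where "c0 \<noteq> 0" "Z' q = c0 *s Z q" using Z'_multiple q by blast
  moreover from this have "c q = c0" using F.theta1_Z[OF q] by (simp add: c_def pair_scale_right)
  ultimately show "Z' q = c q *s Z q" "c q \<noteq> 0" by simp_all
qed

lemma Zbar'_eq: "cconj (Z' q) = cnj (c q) *s cconj (Z q)"
  by (simp add: Z'_eq cconj_scale)

lemma theta'_eq: "\<theta>' q = \<sigma> q *s \<theta> q"
proof -
  have "pair (\<theta>' q) (Z q) = 0" "pair (\<theta>' q) (cconj (Z q)) = 0"
    using F'.theta_Z[OF q] F'.theta_Zbar[OF q] c_nonzero
    by (simp_all add: Z'_eq cconj_scale pair_scale_right)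
  then show ?thesis using F.covector_expansion[OF q, of "\<theta>' q"] by (simp add: \<sigma>_def)
qed

lemma \<sigma>_real: "cnj (\<sigma> q) = \<sigma> q"
  unfolding \<sigma>_def using pair_cconj_cconj[of "\<theta>' q" "T q"] F'.theta_real[OF q] F.reeb_real[OF q]
  by simp

lemma \<sigma>_nonzero: "\<sigma> q \<noteq> 0"
  using theta'_eq F'.theta_nonzero[OF q] by auto

lemma theta1'_eq: "\<theta>1' q = g q *s \<theta>1 q + h q *s \<theta> q"
proof -
  have "pair (\<theta>1' q) (cconj (Z q)) = 0"
    using F'.theta1_Zbar[OF q] c_nonzero by (simp add: Zbar'_eq pair_scale_right)
  then show ?thesis
    using F.covector_expansion[OF q, of "\<theta>1' q"] by (simp add: g_def h_def add.commute)
qed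

lemma g_mult_c: "g q * c q = 1"
  using F'.theta1_Z[OF q] by (simp add: Z'_eq pair_scale_right g_def mult.commute)

lemma vf_Z': "vf Z' f q = c q * vf Z f q"
  by (simp add: vf_def Z'_eq dfun_scale)

lemma vf_Zbar': "vf (\<lambda>x. cconj (Z' x)) f q = cnj (c q) * vf (\<lambda>x. cconj (Z x)) f q"
  by (simp add: vf_def Zbar'_eq dfun_scale)

end

context
  fixes p assumes p: "p \<in> U"
begin

lemma fields_differentiable:
  "\<And>j. (\<lambda>q. \<theta> q $ j) differentiable (at p)" "\<And>j. (\<lambda>q. \<theta>1 q $ j) differentiable (at p)"
  "\<And>j. (\<lambda>q. Z q $ j) differentiable (at p)" "\<And>j. (\<lambda>q. cconj (Z q) $ j) differentiable (at p)"
  "\<And>j. (\<lambda>q. T q $ j) differentiable (at p)" "\<And>j. (\<lambda>q. Z' q $ j) differentiable (at p)"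
  "\<And>j. (\<lambda>q. \<theta>' q $ j) differentiable (at p)" "\<And>j. (\<lambda>q. \<theta>1' q $ j) differentiable (at p)"
  using F.smooth_fields F'.smooth_fields p smooth_field_differentiable
    smooth_field_cconj_differentiable by blast+

lemma factors_differentiable:
  "c differentiable (at p)" "\<sigma> differentiable (at p)"
  "g differentiable (at p)" "h differentiable (at p)"
  unfolding c_def[abs_def] \<sigma>_def[abs_def] g_def[abs_def] h_def[abs_def]
  by (intro pair_differentiable fields_differentiable)+

lemma dform_theta':
  "dform \<theta>' p v w =
    \<sigma> p * dform \<theta> p v w + (dfun \<sigma> p v * pair (\<theta> p) w - dfun \<sigma> p w * pair (\<theta> p) v)"
proof -
  have "\<forall>q\<in>U. \<theta>' q = \<sigma> q *s \<theta> q + (\<lambda>q. 0) q *s \<theta> q" using theta'_eq by simp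
  from dform_leibniz[OF F.open_U p this factors_differentiable(2) differentiable_const
      fields_differentiable(1,1)]
  show ?thesis by (simp add: dfun_const)
qed

lemma dform_theta1':
  "dform \<theta>1' p v w =
      g p * dform \<theta>1 p v w + (dfun g p v * pair (\<theta>1 p) w - dfun g p w * pair (\<theta>1 p) v)
    + h p * dform \<theta> p v w + (dfun h p v * pair (\<theta> p) w - dfun h p w * pair (\<theta> p) v)"
  using dform_leibniz[OF F.open_U p _ factors_differentiable(3,4) fields_differentiable(2,1)]
    theta1'_eq by blast

lemma levi'_eq: "levi \<theta>' Z' p = c p * cnj (c p) * \<sigma> p * levi \<theta> Z p"
  unfolding levi_def Zbar'_eq[OF p] Z'_eq[OF p]
  using F.theta_Z[OF p] F.theta_Zbar[OF p]
  by (simp add: dform_scale_left dform_scale_right dform_theta' cconj_scale pair_scale_right)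

lemma theta_reeb': "pair (\<theta> p) (T' p) = 1 / \<sigma> p"
  using F'.theta_reeb[OF p] theta'_eq[OF p] \<sigma>_nonzero[OF p]
  by (simp add: pair_scale_left field_simps)

lemma reeb'_expansion:
  "T' p = (1 / \<sigma> p) *s T p + pair (\<theta>1 p) (T' p) *s Z p + cnj (pair (\<theta>1 p) (T' p)) *s cconj (Z p)"
proof -
  have "pair (cconj (\<theta>1 p)) (T' p) = cnj (pair (\<theta>1 p) (T' p))"
    using F'.reeb_real[OF p] by (simp add: pair_cconj_left)
  then show ?thesis using F.vector_expansion[OF p, of "T' p"] by (simp add: theta_reeb')
qed

lemma reeb'_Z_coeff:
  "pair (\<theta>1 p) (T' p) = - \<i> * cnj (dfun \<sigma> p (Z p)) / (\<sigma> p ^ 2 * levi \<theta> Z p)"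
proof -
  define m where "m = pair (\<theta>1 p) (T' p)"
  have "dform \<theta> p (cconj (Z p)) (Z p) = - \<i> * levi \<theta> Z p"
    using dform_antisym[of \<theta> p "cconj (Z p)"] F.dform_theta_Z_Zbar[OF p] by simp
  moreover have "dform \<theta> p (Z p) (Z p) = 0"
    using dform_antisym[of \<theta> p "Z p" "Z p"] by simp
  ultimately have "dform \<theta> p (T' p) (Z p) = - \<i> * levi \<theta> Z p * cnj m"
    by (subst reeb'_expansion)
      (simp add: dform_add_left dform_scale_left F.dform_theta_reeb[OF p] m_def)
  moreover have "0 = dform \<theta>' p (T' p) (Z p)"
    using F'.dform_theta_reeb[OF p] by simp
  ultimately have "0 = \<sigma> p * (- \<i> * levi \<theta> Z p * cnj m) - dfun \<sigma> p (Z p) / \<sigma> p"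
    by (simp add: dform_theta' F.theta_Z[OF p] theta_reeb')
  then have "cnj m = \<i> * dfun \<sigma> p (Z p) / (\<sigma> p ^ 2 * levi \<theta> Z p)"
    using \<sigma>_nonzero[OF p] F.levi_nonzero[OF p] by (simp add: field_simps power2_eq_square)
  from arg_cong[OF this, of cnj] show ?thesis
    using \<sigma>_real[OF p] F.levi_real[OF p] by (simp add: m_def)
qed

lemma c_mult_h: "c p * h p = \<i> * cnj (dfun \<sigma> p (Z p)) / (\<sigma> p * levi \<theta> Z p)"
proof -
  have "0 = pair (\<theta>1' p) (T' p)" using F'.theta1_reeb[OF p] by simp
  also have "\<dots> = g p * pair (\<theta>1 p) (T' p) + h p / \<sigma> p"
    by (simp add: theta1'_eq[OF p] pair_add_left pair_scale_left theta_reeb')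
  finally have "h p = - \<sigma> p * g p * pair (\<theta>1 p) (T' p)"
    using \<sigma>_nonzero[OF p] by (simp add: field_simps eq_neg_iff_add_eq_0)
  then have "c p * h p = - \<sigma> p * (g p * c p) * pair (\<theta>1 p) (T' p)"
    by (simp add: algebra_simps)
  then show ?thesis
    using \<sigma>_nonzero[OF p] by (simp add: g_mult_c[OF p] reeb'_Z_coeff power2_eq_square)
qed

lemma dfun_g: "dfun g p v = - dfun c p v / c p ^ 2"
proof -
  have "0 = dfun (\<lambda>q. g q * c q) p v"
    by (simp add: dfun_cong[OF F.open_U p, of _ "\<lambda>q. 1"] g_mult_c dfun_const)
  also have "\<dots> = g p * dfun c p v + dfun g p v * c p"
    by (rule dfun_mult[OF factors_differentiable(3,1)])
  finally have "c p ^ 2 * dfun g p v = - dfun c p v"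
    using g_mult_c[OF p] by algebra
  then show ?thesis
    using c_nonzero[OF p] by (simp add: field_simps)
qed

lemma connection'_Zbar:
  "pair (\<omega>' p) (cconj (Z' p)) = cnj (c p) *
    (pair (\<omega> p) (cconj (Z p)) + dfun c p (cconj (Z p)) / c p - cnj (dfun \<sigma> p (Z p)) / \<sigma> p)"
proof -
  have "pair (\<omega>' p) (cconj (Z' p)) = c p * cnj (c p) * dform \<theta>1' p (Z p) (cconj (Z p))"
    using F'.connection_Zbar[OF p] unfolding Z'_eq[OF p]
    by (simp add: cconj_scale dform_scale_left dform_scale_right)
  also have "dform \<theta>1' p (Z p) (cconj (Z p)) = g p * pair (\<omega> p) (cconj (Z p))
      - dfun g p (cconj (Z p)) + h p * (\<i> * levi \<theta> Z p)"
    by (simp add: dform_theta1' F.connection_Zbar[OF p] F.dform_theta_Z_Zbar[OF p]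
        F.theta1_Z[OF p] F.theta1_Zbar[OF p] F.theta_Z[OF p] F.theta_Zbar[OF p])
  also have "c p * cnj (c p) * \<dots> = cnj (c p) * ((g p * c p) * pair (\<omega> p) (cconj (Z p))
      - c p * dfun g p (cconj (Z p)) + \<i> * levi \<theta> Z p * (c p * h p))"
    by (simp add: algebra_simps)
  also have "\<dots> = cnj (c p) *
      (pair (\<omega> p) (cconj (Z p)) + dfun c p (cconj (Z p)) / c p - cnj (dfun \<sigma> p (Z p)) / \<sigma> p)"
    unfolding g_mult_c[OF p] c_mult_h dfun_g
    using c_nonzero[OF p] \<sigma>_nonzero[OF p] F.levi_nonzero[OF p]
    by (simp add: field_simps power2_eq_square)
  finally show ?thesis .
qed

lemma hess_1_1bar_change:
  assumes f: "smooth_on U f"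
  shows "hess_1_1bar Z' \<omega>' f p = c p * cnj (c p) *
    (hess_1_1bar Z \<omega> f p + cnj (dfun \<sigma> p (Z p)) * vf Z f p / \<sigma> p)"
proof -
  have Zf: "vf Z f differentiable (at p)"
    using vf_differentiable[OF fields_differentiable(3)] smooth_on_partial_differentiable[OF f p] .
  have "vf (\<lambda>q. cconj (Z' q)) (vf Z' f) p
      = dfun (\<lambda>q. c q * vf Z f q) p (cnj (c p) *s cconj (Z p))"
    unfolding vf_def[of _ "vf Z' f"] Zbar'_eq[OF p]
    by (rule dfun_cong[OF F.open_U p]) (simp add: vf_Z')
  also have "\<dots> = cnj (c p) *
      (c p * vf (\<lambda>q. cconj (Z q)) (vf Z f) p + dfun c p (cconj (Z p)) * vf Z f p)"
    by (simp add: dfun_scale dfun_mult[OF factors_differentiable(1) Zf] vf_def[of _ "vf Z f"])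
  finally show ?thesis
    unfolding hess_1_1bar_def connection'_Zbar vf_Z'[OF p]
    using c_nonzero[OF p] \<sigma>_nonzero[OF p] by (simp add: field_simps)
qed

lemma hess_1bar_1_change:
  assumes f: "smooth_on U f"
  shows "hess_1bar_1 Z' \<omega>' f p = c p * cnj (c p) *
    (hess_1bar_1 Z \<omega> f p + dfun \<sigma> p (Z p) * vf (\<lambda>q. cconj (Z q)) f p / \<sigma> p)"
proof -
  have Zbar_f: "vf (\<lambda>q. cconj (Z q)) f differentiable (at p)"
    using vf_differentiable[OF fields_differentiable(4)] smooth_on_partial_differentiable[OF f p] .
  have cnj_c: "(\<lambda>q. cnj (c q)) differentiable (at p)"
    using factors_differentiable(1) by (simp add: differentiable_cnj_iff)
  have "vf Z' (vf (\<lambda>q. cconj (Z' q)) f) p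
      = dfun (\<lambda>q. cnj (c q) * vf (\<lambda>q. cconj (Z q)) f q) p (c p *s Z p)"
    unfolding vf_def[of Z'] Z'_eq[OF p]
    by (rule dfun_cong[OF F.open_U p]) (simp add: vf_Zbar')
  also have "\<dots> = c p * (cnj (c p) * vf Z (vf (\<lambda>q. cconj (Z q)) f) p
      + dfun (\<lambda>q. cnj (c q)) p (Z p) * vf (\<lambda>q. cconj (Z q)) f p)"
    by (simp add: dfun_scale dfun_mult[OF cnj_c Zbar_f] vf_def[of Z])
  also have "dfun (\<lambda>q. cnj (c q)) p (Z p) = cnj (dfun c p (cconj (Z p)))"
    using dfun_cnj[OF factors_differentiable(1), of "cconj (Z p)"] by simp
  finally show ?thesis
    unfolding hess_1bar_1_def pair_cconj_left[of "\<omega>' p"] pair_cconj_left[of "\<omega> p"] cconj_cconj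
      connection'_Zbar vf_Zbar'[OF p]
    using c_nonzero[OF p] \<sigma>_nonzero[OF p] \<sigma>_real[OF p] by (simp add: field_simps)
qed

lemma sublaplacian_change:
  assumes "smooth_on U f"
  shows "\<sigma> p * sublaplacian Z' \<theta>' \<omega>' f p = sublaplacian Z \<theta> \<omega> f p
    - (dfun \<sigma> p (Z p) * vf (\<lambda>q. cconj (Z q)) f p + cnj (dfun \<sigma> p (Z p)) * vf Z f p)
      / (\<sigma> p * levi \<theta> Z p)"
  unfolding sublaplacian_eq_hess hess_1_1bar_change[OF assms] hess_1bar_1_change[OF assms] levi'_eq
  using c_nonzero[OF p] \<sigma>_nonzero[OF p] F.levi_nonzero[OF p]
  by (simp add: field_simps)

lemma dcCR_invariant:
  assumes u: "smooth_on U (\<lambda>q. complex_of_real (u q))"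
  shows "dcCR Z \<theta> \<theta>1 \<omega> u p = dcCR Z' \<theta>' \<theta>1' \<omega>' u p"
proof -
  define f where "f = (\<lambda>q. complex_of_real (u q))"
  define u1 where "u1 = vf Z f p"
  define u1bar where "u1bar = vf (\<lambda>q. cconj (Z q)) f p"
  define \<Delta> where "\<Delta> = sublaplacian Z \<theta> \<omega> f p"
  define \<Delta>' where "\<Delta>' = sublaplacian Z' \<theta>' \<omega>' f p"
  have h_bar: "cnj (c p) * cnj (h p) = - \<i> * dfun \<sigma> p (Z p) / (\<sigma> p * levi \<theta> Z p)"
    using arg_cong[OF c_mult_h, of cnj] \<sigma>_real[OF p] F.levi_real[OF p] by simp
  have \<Delta>': "\<sigma> p * \<Delta>' = \<Delta> - (dfun \<sigma> p (Z p) * u1bar + cnj (dfun \<sigma> p (Z p)) * u1)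
      / (\<sigma> p * levi \<theta> Z p)"
    using sublaplacian_change[OF u[folded f_def]] by (simp add: u1_def u1bar_def \<Delta>_def \<Delta>'_def)
  have theta_coeff:
    "\<i> / 2 * (cnj (c p) * cnj (h p) * u1bar - c p * h p * u1) + \<sigma> p * \<Delta>' / 2 = \<Delta> / 2"
    unfolding h_bar c_mult_h \<Delta>' using \<sigma>_nonzero[OF p] F.levi_nonzero[OF p]
    by (simp add: field_simps)
  have "dcCR Z' \<theta>' \<theta>1' \<omega>' u p = (\<i> / 2) *s ((cnj (c p) * u1bar) *s cconj (g p *s \<theta>1 p + h p *s \<theta> p)
      - (c p * u1) *s (g p *s \<theta>1 p + h p *s \<theta> p)) + (\<Delta>' / 2) *s (\<sigma> p *s \<theta> p)"
    by (simp add: dcCR_def Let_def f_def u1_def u1bar_def \<Delta>'_def vf_Z'[OF p] vf_Zbar'[OF p]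
        theta1'_eq[OF p] theta'_eq[OF p])
  also have "\<dots> = (\<i> / 2) *s ((cnj (g p * c p) * u1bar) *s cconj (\<theta>1 p) - (g p * c p * u1) *s \<theta>1 p)
      + (\<i> / 2 * (cnj (c p) * cnj (h p) * u1bar - c p * h p * u1) + \<sigma> p * \<Delta>' / 2) *s \<theta> p"
    by (simp add: cconj_add cconj_scale F.theta_real[OF p] vec_eq_iff algebra_simps)
  also have "\<dots> = dcCR Z \<theta> \<theta>1 \<omega> u p"
    unfolding g_mult_c[OF p] theta_coeff
    by (simp add: dcCR_def Let_def f_def u1_def u1bar_def \<Delta>_def)
  finally show ?thesis ..
qed

end

end

theorem lemma3p1:
  fixes U :: "(real^3) set"
    and Z Z' \<theta> \<theta>' T T' \<theta>1 \<theta>1' \<omega> \<omega>' :: "real^3 \<Rightarrow> complex^3"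
    and A A' :: "real^3 \<Rightarrow> complex"
    and u :: "real^3 \<Rightarrow> real"
  assumes "open U"
    and "CR_frame U Z"
    and "CR_frame U Z'"
    and "\<forall>p\<in>U. \<exists>c::complex. c \<noteq> 0 \<and> Z' p = c *s Z p"
    and "pseudohermitian_data U Z \<theta> T \<theta>1 \<omega> A"
    and "pseudohermitian_data U Z' \<theta>' T' \<theta>1' \<omega>' A'"
    and "smooth_on U (\<lambda>p. complex_of_real (u p))"
  shows "\<forall>p\<in>U. dcCR Z \<theta> \<theta>1 \<omega> u p = dcCR Z' \<theta>' \<theta>1' \<omega>' u p"
proof -
  interpret frame_change U Z \<theta> T \<theta>1 \<omega> A Z' \<theta>' T' \<theta>1' \<omega>' A'
    using assms by unfold_locales
  show ?thesis using dcCR_invariant assms(7) by blast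
qed

end
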